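(* Let $\mathscr Q_n$ be a non-singular quadric in $\mathrm{PG}(n,2)$ of projective index $g\ge1$, let $0\le s<g$, let $\alpha_s$ be an $s$-dimensional subspace contained in $\mathscr Q_n$, and let $\Gamma_s$ be the graph constructed from $\alpha_s$ as described below. If $\mathcal C$ is a clique of $\Gamma_s$ with $2^{g+1}-1$ vertices containing no vertex of type (iii), then $\mathcal C$ is the point set of a generator of $\mathscr Q_n$ containing $\alpha_s$.
   Context: A non-singular quadric $\mathscr Q_n$ in $\mathrm{PG}(n,2)$ is the point set of a non-degenerate quadric; its projective index $g$ is the largest dimension of a projective subspace contained in $\mathscr Q_n$, and the $g$-dimensional subspaces contained in $\mathscr Q_n$ are its generators. The point-graph $\Gamma$ has vertex set the points of $\mathscr Q_n$, two distinct points adjacent iff the line joining them is contained in $\mathscr Q_n$. A point $X$ of $\mathscr Q_n$ has type (i) if $X\in\alpha_s$; type (ii) if $X\notin\alpha_s$ and $\langle\alpha_s,X\rangle\subseteq\mathscr Q_n$; type (iii) otherwise. Let $\mathcal X_s$ be the type (ii) points and $\mathcal Y_s$ the points of type (i) or (iii). The graph $\Gamma_s$ has the same vertex set as $\Gamma$ and the same edges, except that for each vertex $R\in\mathcal Y_s$ having exactly $\frac12|\mathcal X_s|$ neighbours in $\mathcal X_s$ (in $\Gamma$), those edges are deleted and $R$ is joined instead to the other $\frac12|\mathcal X_s|$ vertices of $\mathcal X_s$. *)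

theory Defs
  imports Main
begin

text \<open>Model of PG(n,2): the underlying vector space GF(2)^(n+1) is represented by
  functions nat => bool vanishing outside the index range 0..n; addition is pointwise
  exclusive or. Since GF(2) has the single nonzero scalar 1, the points of PG(n,2)
  are exactly the nonzero vectors.\<close>

definition vecs :: "nat \<Rightarrow> (nat \<Rightarrow> bool) set" where
  "vecs n = {v. \<forall>i>n. \<not> v i}"

definition vzero :: "nat \<Rightarrow> bool" where
  "vzero = (\<lambda>i. False)"

definition vadd :: "(nat \<Rightarrow> bool) \<Rightarrow> (nat \<Rightarrow> bool) \<Rightarrow> (nat \<Rightarrow> bool)" where
  "vadd u v = (\<lambda>i. u i \<noteq> v i)"

definition pg_points :: "nat \<Rightarrow> (nat \<Rightarrow> bool) set" where
  "pg_points n = vecs n - {vzero}"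

text \<open>Linear subspaces of GF(2)^(n+1) (over GF(2), closure under addition suffices).\<close>
definition lin_subspace :: "nat \<Rightarrow> (nat \<Rightarrow> bool) set \<Rightarrow> bool" where
  "lin_subspace n W \<longleftrightarrow> W \<subseteq> vecs n \<and> vzero \<in> W \<and> (\<forall>u\<in>W. \<forall>v\<in>W. vadd u v \<in> W)"

text \<open>Point set of a projective subspace of dimension d of PG(n,2):
  the nonzero vectors of a linear subspace of vector dimension d+1
  (equivalently of cardinality 2^(d+1)).\<close>
definition proj_subspace :: "nat \<Rightarrow> nat \<Rightarrow> (nat \<Rightarrow> bool) set \<Rightarrow> bool" where
  "proj_subspace n d S \<longleftrightarrow> lin_subspace n (insert vzero S) \<and> vzero \<notin> S
     \<and> card (insert vzero S) = 2 ^ (d + 1)"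

definition proj_span :: "nat \<Rightarrow> (nat \<Rightarrow> bool) set \<Rightarrow> (nat \<Rightarrow> bool) set" where
  "proj_span n S = \<Inter>{W. lin_subspace n W \<and> S \<subseteq> W} - {vzero}"

definition qform :: "nat \<Rightarrow> (nat \<Rightarrow> nat \<Rightarrow> bool) \<Rightarrow> (nat \<Rightarrow> bool) \<Rightarrow> bool" where
  "qform n a v = odd (card {(i, j). i \<le> j \<and> j \<le> n \<and> a i j \<and> v i \<and> v j})"

definition polar :: "nat \<Rightarrow> (nat \<Rightarrow> nat \<Rightarrow> bool) \<Rightarrow> (nat \<Rightarrow> bool) \<Rightarrow> (nat \<Rightarrow> bool) \<Rightarrow> bool" where
  "polar n a u v = (qform n a (vadd u v) \<noteq> (qform n a u \<noteq> qform n a v))"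

definition quadric :: "nat \<Rightarrow> (nat \<Rightarrow> nat \<Rightarrow> bool) \<Rightarrow> (nat \<Rightarrow> bool) set" where
  "quadric n a = {v \<in> pg_points n. \<not> qform n a v}"

definition nonsingular :: "nat \<Rightarrow> (nat \<Rightarrow> nat \<Rightarrow> bool) \<Rightarrow> bool" where
  "nonsingular n a \<longleftrightarrow> \<not> (\<exists>v\<in>quadric n a. \<forall>w\<in>vecs n. \<not> polar n a v w)"

definition proj_index :: "nat \<Rightarrow> (nat \<Rightarrow> nat \<Rightarrow> bool) \<Rightarrow> nat" where
  "proj_index n a = (GREATEST d. \<exists>S. proj_subspace n d S \<and> S \<subseteq> quadric n a)"

definition generator :: "nat \<Rightarrow> (nat \<Rightarrow> nat \<Rightarrow> bool) \<Rightarrow> (nat \<Rightarrow> bool) set \<Rightarrow> bool" where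
  "generator n a S \<longleftrightarrow> proj_subspace n (proj_index n a) S \<and> S \<subseteq> quadric n a"

text \<open>Point graph: distinct points X, Y of the quadric are adjacent iff the line
  joining them, {X, Y, X+Y}, is contained in the quadric.\<close>
definition qadj :: "nat \<Rightarrow> (nat \<Rightarrow> nat \<Rightarrow> bool) \<Rightarrow> (nat \<Rightarrow> bool) \<Rightarrow> (nat \<Rightarrow> bool) \<Rightarrow> bool" where
  "qadj n a X Y \<longleftrightarrow> X \<in> quadric n a \<and> Y \<in> quadric n a \<and> X \<noteq> Y
     \<and> proj_span n {X, Y} \<subseteq> quadric n a"

definition type_i :: "nat \<Rightarrow> (nat \<Rightarrow> nat \<Rightarrow> bool) \<Rightarrow> (nat \<Rightarrow> bool) set \<Rightarrow> (nat \<Rightarrow> bool) \<Rightarrow> bool" where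
  "type_i n a \<alpha> X \<longleftrightarrow> X \<in> quadric n a \<and> X \<in> \<alpha>"

definition type_ii :: "nat \<Rightarrow> (nat \<Rightarrow> nat \<Rightarrow> bool) \<Rightarrow> (nat \<Rightarrow> bool) set \<Rightarrow> (nat \<Rightarrow> bool) \<Rightarrow> bool" where
  "type_ii n a \<alpha> X \<longleftrightarrow> X \<in> quadric n a \<and> X \<notin> \<alpha> \<and> proj_span n (insert X \<alpha>) \<subseteq> quadric n a"

definition type_iii :: "nat \<Rightarrow> (nat \<Rightarrow> nat \<Rightarrow> bool) \<Rightarrow> (nat \<Rightarrow> bool) set \<Rightarrow> (nat \<Rightarrow> bool) \<Rightarrow> bool" where
  "type_iii n a \<alpha> X \<longleftrightarrow> X \<in> quadric n a \<and> \<not> type_i n a \<alpha> X \<and> \<not> type_ii n a \<alpha> X"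

definition Xs :: "nat \<Rightarrow> (nat \<Rightarrow> nat \<Rightarrow> bool) \<Rightarrow> (nat \<Rightarrow> bool) set \<Rightarrow> (nat \<Rightarrow> bool) set" where
  "Xs n a \<alpha> = {X. type_ii n a \<alpha> X}"

definition Ys :: "nat \<Rightarrow> (nat \<Rightarrow> nat \<Rightarrow> bool) \<Rightarrow> (nat \<Rightarrow> bool) set \<Rightarrow> (nat \<Rightarrow> bool) set" where
  "Ys n a \<alpha> = {X. type_i n a \<alpha> X \<or> type_iii n a \<alpha> X}"

definition switched :: "nat \<Rightarrow> (nat \<Rightarrow> nat \<Rightarrow> bool) \<Rightarrow> (nat \<Rightarrow> bool) set \<Rightarrow> (nat \<Rightarrow> bool) \<Rightarrow> bool" where
  "switched n a \<alpha> R \<longleftrightarrow> R \<in> Ys n a \<alpha>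
     \<and> 2 * card {X \<in> Xs n a \<alpha>. qadj n a R X} = card (Xs n a \<alpha>)"

definition gs_adj :: "nat \<Rightarrow> (nat \<Rightarrow> nat \<Rightarrow> bool) \<Rightarrow> (nat \<Rightarrow> bool) set \<Rightarrow> (nat \<Rightarrow> bool) \<Rightarrow> (nat \<Rightarrow> bool) \<Rightarrow> bool" where
  "gs_adj n a \<alpha> X Y \<longleftrightarrow> X \<in> quadric n a \<and> Y \<in> quadric n a \<and> X \<noteq> Y \<and>
     (if (switched n a \<alpha> X \<and> Y \<in> Xs n a \<alpha>) \<or> (switched n a \<alpha> Y \<and> X \<in> Xs n a \<alpha>)
      then \<not> qadj n a X Y else qadj n a X Y)"

definition gs_clique :: "nat \<Rightarrow> (nat \<Rightarrow> nat \<Rightarrow> bool) \<Rightarrow> (nat \<Rightarrow> bool) set \<Rightarrow> (nat \<Rightarrow> bool) set \<Rightarrow> bool" where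
  "gs_clique n a \<alpha> C \<longleftrightarrow> C \<subseteq> quadric n a \<and> (\<forall>X\<in>C. \<forall>Y\<in>C. X \<noteq> Y \<longrightarrow> gs_adj n a \<alpha> X Y)"

end

theory Submission
  imports Defs
begin

text \<open>Every vertex of the clique lies in \<open>\<alpha>\<^sub>s\<close> or is of type (ii). Type (ii) vertices are
  never switched, so two of them are adjacent in \<open>\<Gamma>\<^sub>s\<close> exactly when they are adjacent in the
  point graph; and a type (ii) point spans with \<open>\<alpha>\<^sub>s\<close> a subspace of the quadric. Hence any two
  points of \<open>C \<union> \<alpha>\<^sub>s\<close> are orthogonal for the polar form, so their linear span is totally
  singular. That span is a subspace of size a power of two containing the \<open>2\<^sup>g\<^sup>+\<^sup>1\<close> vectors
  of \<open>C \<union> {0}\<close>, and no totally singular subspace is larger, so the span is \<open>C \<union> {0}\<close> itself.\<close>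

lemma vadd_eq_vzero_iff: "vadd x y = vzero \<longleftrightarrow> x = y"
  by (auto simp: vadd_def vzero_def fun_eq_iff)

lemma vadd_self [simp]: "vadd x x = vzero"
  by (simp add: vadd_eq_vzero_iff)

lemma vadd_vadd_cancel_left [simp]: "vadd x (vadd x y) = y"
  by (auto simp: vadd_def fun_eq_iff)

lemma vadd_vadd_cancel_right [simp]: "vadd (vadd x y) y = x"
  by (auto simp: vadd_def fun_eq_iff)

lemma vadd_vecs: "x \<in> vecs n \<Longrightarrow> y \<in> vecs n \<Longrightarrow> vadd x y \<in> vecs n"
  by (auto simp: vadd_def vecs_def)

lemma vzero_vecs [simp]: "vzero \<in> vecs n"
  by (simp add: vzero_def vecs_def)

lemma finite_vecs: "finite (vecs n)"
proof -
  have "vecs n \<subseteq> (\<lambda>A i. i \<in> A) ` Pow {..n}"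
  proof
    fix v assume "v \<in> vecs n"
    then have "v = (\<lambda>i. i \<in> {i. i \<le> n \<and> v i})"
      by (auto simp: vecs_def fun_eq_iff not_less[symmetric])
    then show "v \<in> (\<lambda>A i. i \<in> A) ` Pow {..n}"
      by (rule image_eqI) auto
  qed
  then show ?thesis
    by (rule finite_subset) auto
qed

lemma quadric_subset_vecs: "quadric n a \<subseteq> vecs n"
  by (auto simp: quadric_def pg_points_def)

lemma vzero_notin_quadric: "vzero \<notin> quadric n a"
  by (auto simp: quadric_def pg_points_def)

lemma finite_quadric: "finite (quadric n a)"
  using finite_subset[OF quadric_subset_vecs finite_vecs] .

lemma lin_subspace_finite: "lin_subspace n W \<Longrightarrow> finite W"
  using finite_subset finite_vecs unfolding lin_subspace_def by blast

definition parity :: "'a set \<Rightarrow> ('a \<Rightarrow> bool) \<Rightarrow> bool" where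
  "parity P f \<longleftrightarrow> odd (card {p \<in> P. f p})"

lemma parity_insert:
  assumes "finite P" "x \<notin> P"
  shows "parity (insert x P) f = (f x \<noteq> parity P f)"
proof (cases "f x")
  case True
  then have "{p \<in> insert x P. f p} = insert x {p \<in> P. f p}" by auto
  with assms True show ?thesis by (simp add: parity_def)
next
  case False
  then have "{p \<in> insert x P. f p} = {p \<in> P. f p}" by auto
  with False show ?thesis by (simp add: parity_def)
qed

lemma parity_empty [simp]: "\<not> parity {} f"
  by (simp add: parity_def)

lemma parity_xor: "finite P \<Longrightarrow> parity P (\<lambda>p. f p \<noteq> g p) = (parity P f \<noteq> parity P g)"
  by (induction P rule: finite_induct) (auto simp: parity_insert)

lemma parity_cong: "(\<And>p. p \<in> P \<Longrightarrow> f p = g p) \<Longrightarrow> parity P f = parity P g"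
  unfolding parity_def by (metis (mono_tags, lifting) Collect_cong)

definition coeff_pairs :: "nat \<Rightarrow> (nat \<Rightarrow> nat \<Rightarrow> bool) \<Rightarrow> (nat \<times> nat) set" where
  "coeff_pairs n a = {(i, j). i \<le> j \<and> j \<le> n \<and> a i j}"

lemma finite_coeff_pairs: "finite (coeff_pairs n a)"
  by (rule finite_subset[of _ "{..n} \<times> {..n}"]) (auto simp: coeff_pairs_def)

lemma qform_eq_parity: "qform n a v = parity (coeff_pairs n a) (\<lambda>(i, j). v i \<and> v j)"
proof -
  have "{(i, j). i \<le> j \<and> j \<le> n \<and> a i j \<and> v i \<and> v j}
      = {p \<in> coeff_pairs n a. (\<lambda>(i, j). v i \<and> v j) p}"
    by (auto simp: coeff_pairs_def)
  then show ?thesis by (simp add: qform_def parity_def)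
qed

definition bilin :: "nat \<Rightarrow> (nat \<Rightarrow> nat \<Rightarrow> bool) \<Rightarrow> (nat \<Rightarrow> bool) \<Rightarrow> (nat \<Rightarrow> bool) \<Rightarrow> bool" where
  "bilin n a u v = parity (coeff_pairs n a) (\<lambda>(i, j). (u i \<and> v j) \<noteq> (v i \<and> u j))"

lemma qform_vadd: "qform n a (vadd u v) = (qform n a u \<noteq> (qform n a v \<noteq> bilin n a u v))"
proof -
  let ?P = "coeff_pairs n a"
  let ?uu = "\<lambda>(i, j). u i \<and> u j" and ?vv = "\<lambda>(i, j). v i \<and> v j"
    and ?uv = "\<lambda>(i, j). (u i \<and> v j) \<noteq> (v i \<and> u j)"
  have "qform n a (vadd u v) = parity ?P (\<lambda>p. ?uu p \<noteq> (?vv p \<noteq> ?uv p))"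
    unfolding qform_eq_parity by (rule parity_cong) (auto simp: vadd_def)
  also have "\<dots> = (parity ?P ?uu \<noteq> parity ?P (\<lambda>p. ?vv p \<noteq> ?uv p))"
    by (rule parity_xor[OF finite_coeff_pairs])
  also have "parity ?P (\<lambda>p. ?vv p \<noteq> ?uv p) = (parity ?P ?vv \<noteq> parity ?P ?uv)"
    by (rule parity_xor[OF finite_coeff_pairs])
  finally show ?thesis
    by (simp only: qform_eq_parity bilin_def)
qed

lemma polar_eq_bilin: "polar n a u v = bilin n a u v"
  by (auto simp: polar_def qform_vadd)

lemma bilin_commute: "bilin n a u v = bilin n a v u"
  unfolding bilin_def by (rule parity_cong) auto

lemma bilin_vadd_right: "bilin n a u (vadd v w) = (bilin n a u v \<noteq> bilin n a u w)"
proof -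
  let ?uv = "\<lambda>(i, j). (u i \<and> v j) \<noteq> (v i \<and> u j)"
    and ?uw = "\<lambda>(i, j). (u i \<and> w j) \<noteq> (w i \<and> u j)"
  have "bilin n a u (vadd v w) = parity (coeff_pairs n a) (\<lambda>p. ?uv p \<noteq> ?uw p)"
    unfolding bilin_def by (rule parity_cong) (auto simp: vadd_def)
  also have "\<dots> = (parity (coeff_pairs n a) ?uv \<noteq> parity (coeff_pairs n a) ?uw)"
    by (rule parity_xor[OF finite_coeff_pairs])
  finally show ?thesis
    by (simp only: bilin_def)
qed

lemma bilin_vadd_left: "bilin n a (vadd v w) u = (bilin n a v u \<noteq> bilin n a w u)"
  by (metis bilin_commute bilin_vadd_right)

lemma qform_vzero [simp]: "\<not> qform n a vzero"
  by (simp add: qform_def vzero_def)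

lemma bilin_vzero_left [simp]: "\<not> bilin n a vzero u"
  by (simp add: bilin_def vzero_def parity_def)

lemma bilin_vzero_right [simp]: "\<not> bilin n a u vzero"
  by (simp add: bilin_commute[of n a u])

lemma not_polar_if_line_in_quadric:
  assumes "X \<in> quadric n a" "Y \<in> quadric n a" "vadd X Y \<in> quadric n a"
  shows "\<not> polar n a X Y"
  using assms by (auto simp: polar_def quadric_def)

lemma not_polar_self: "\<not> polar n a X X"
  by (simp add: polar_def)

definition lin_span :: "nat \<Rightarrow> (nat \<Rightarrow> bool) set \<Rightarrow> (nat \<Rightarrow> bool) set" where
  "lin_span n S = \<Inter>{W. lin_subspace n W \<and> S \<subseteq> W}"

lemma lin_subspace_vecs: "lin_subspace n (vecs n)"
  by (simp add: lin_subspace_def vadd_vecs)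

lemma lin_subspace_lin_span: "S \<subseteq> vecs n \<Longrightarrow> lin_subspace n (lin_span n S)"
  using lin_subspace_vecs[of n] unfolding lin_subspace_def lin_span_def by blast

lemma lin_span_superset: "S \<subseteq> lin_span n S"
  by (auto simp: lin_span_def)

lemma lin_span_least: "lin_subspace n W \<Longrightarrow> S \<subseteq> W \<Longrightarrow> lin_span n S \<subseteq> W"
  by (auto simp: lin_span_def)

lemma vadd_in_proj_span:
  "x \<in> S \<Longrightarrow> y \<in> S \<Longrightarrow> x \<noteq> y \<Longrightarrow> vadd x y \<in> proj_span n S"
  by (auto simp: proj_span_def lin_subspace_def vadd_eq_vzero_iff)

text \<open>Orthogonality to \<open>S\<close>, orthogonality to the whole span and singularity are in turn
  closed under addition (the last by \<open>Q(u+v) = Q(u) + Q(v) + B(u,v)\<close>), so each passes from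
  \<open>S\<close> to its span by minimality.\<close>
lemma lin_span_subset_quadric:
  assumes S: "S \<subseteq> quadric n a"
    and orth: "\<And>x y. x \<in> S \<Longrightarrow> y \<in> S \<Longrightarrow> \<not> polar n a x y"
  shows "lin_span n S - {vzero} \<subseteq> quadric n a"
proof -
  have Sv: "S \<subseteq> vecs n"
    using S quadric_subset_vecs by blast
  have orth_left: "lin_span n S \<subseteq> {w \<in> vecs n. \<forall>y \<in> S. \<not> bilin n a w y}"
    using Sv orth
    by (intro lin_span_least) (auto simp: lin_subspace_def vadd_vecs bilin_vadd_left polar_eq_bilin)
  have orth_span: "\<not> bilin n a w z" if w: "w \<in> lin_span n S" and z: "z \<in> lin_span n S" for w z
  proof -
    have "lin_span n S \<subseteq> {z \<in> vecs n. \<not> bilin n a w z}"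
      using Sv orth_left w
      by (intro lin_span_least) (auto simp: lin_subspace_def vadd_vecs bilin_vadd_right)
    with z show ?thesis by blast
  qed
  have L: "lin_subspace n (lin_span n S)"
    using Sv by (rule lin_subspace_lin_span)
  have "lin_span n S \<subseteq> {w \<in> lin_span n S. \<not> qform n a w}"
  proof (rule lin_span_least)
    show "lin_subspace n {w \<in> lin_span n S. \<not> qform n a w}"
      using L orth_span unfolding lin_subspace_def by (auto simp: qform_vadd)
  qed (use S lin_span_superset in \<open>auto simp: quadric_def\<close>)
  with L show ?thesis
    by (auto simp: quadric_def pg_points_def lin_subspace_def)
qed

lemma lin_subspace_extend:
  assumes W: "lin_subspace n W" and v: "v \<in> vecs n" "v \<notin> W"
  shows "lin_subspace n (W \<union> vadd v ` W)" and "card (W \<union> vadd v ` W) = 2 * card W"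
proof -
  have sub: "W \<subseteq> vecs n" and z: "vzero \<in> W" and closed: "\<And>x y. x \<in> W \<Longrightarrow> y \<in> W \<Longrightarrow> vadd x y \<in> W"
    using W unfolding lin_subspace_def by auto
  have "vadd x y \<in> W \<union> vadd v ` W" if "x \<in> W \<union> vadd v ` W" "y \<in> W \<union> vadd v ` W" for x y
  proof -
    have shift: "vadd x' (vadd v y') = vadd v (vadd x' y')" "vadd (vadd v x') y' = vadd v (vadd x' y')"
      "vadd (vadd v x') (vadd v y') = vadd x' y'" for x' y'
      by (auto simp: vadd_def fun_eq_iff)
    from that closed show ?thesis
      by (auto simp: shift)
  qed
  with sub z v show "lin_subspace n (W \<union> vadd v ` W)"
    unfolding lin_subspace_def by (auto intro: vadd_vecs)
  have "W \<inter> vadd v ` W = {}"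
  proof -
    have "vadd v w \<notin> W" if "w \<in> W" for w
      using closed[OF _ that, of "vadd v w"] v(2) by auto
    then show ?thesis by blast
  qed
  moreover have "card (vadd v ` W) = card W"
    by (rule card_image) (metis inj_onI vadd_vadd_cancel_left)
  ultimately show "card (W \<union> vadd v ` W) = 2 * card W"
    using card_Un_disjoint[of W "vadd v ` W"] lin_subspace_finite[OF W] by simp
qed

lemma card_lin_subspace_pow2:
  assumes L: "lin_subspace n L"
  shows "\<exists>m. card L = 2 ^ m"
proof -
  have "\<exists>m'. card L = 2 ^ m'"
    if "lin_subspace n W" "W \<subseteq> L" "card W = 2 ^ m" for W m
    using that
  proof (induction "card L - card W" arbitrary: W m rule: less_induct)
    case less
    show ?case
    proof (cases "W = L")
      case False
      then obtain v where v: "v \<in> L" "v \<notin> W"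
        using less.prems(2) by blast
      then have "v \<in> vecs n"
        using L by (auto simp: lin_subspace_def)
      note ext = lin_subspace_extend[OF less.prems(1) this v(2)]
      have sub: "W \<union> vadd v ` W \<subseteq> L"
        using less.prems(2) v L unfolding lin_subspace_def by blast
      then have "card (W \<union> vadd v ` W) \<le> card L"
        by (rule card_mono[OF lin_subspace_finite[OF L]])
      moreover have "card W > 0"
        using less.prems(3) by simp
      ultimately have "card L - card (W \<union> vadd v ` W) < card L - card W"
        using ext(2) by simp
      with ext sub less.prems(3) show ?thesis
        by (intro less.hyps[of _ "Suc m"]) auto
    qed (use less.prems in blast)
  qed
  moreover have "lin_subspace n {vzero}" "{vzero} \<subseteq> L"
    using L by (auto simp: lin_subspace_def)
  ultimately show ?thesis
    by (metis card.empty card_insert_disjoint empty_iff finite.emptyI power_0 One_nat_def)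
qed

lemma le_proj_index:
  assumes "proj_subspace n d S" "S \<subseteq> quadric n a"
  shows "d \<le> proj_index n a"
  unfolding proj_index_def
proof (rule Greatest_le_nat)
  fix d' assume "\<exists>S. proj_subspace n d' S \<and> S \<subseteq> quadric n a"
  then obtain S' where "insert vzero S' \<subseteq> vecs n" "card (insert vzero S') = 2 ^ (d' + 1)"
    by (auto simp: proj_subspace_def lin_subspace_def)
  then have "2 ^ (d' + 1) \<le> card (vecs n)"
    by (metis card_mono finite_vecs)
  moreover have "d' < 2 ^ (d' + 1)"
    using less_exp[of "d' + 1"] by simp
  ultimately show "d' \<le> card (vecs n)" by linarith
qed (use assms in blast)

lemma card_singular_subspace_le:
  assumes L: "lin_subspace n L" and sing: "L - {vzero} \<subseteq> quadric n a"
  shows "card L \<le> 2 ^ (proj_index n a + 1)"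
proof -
  obtain m where m: "card L = 2 ^ m"
    using card_lin_subspace_pow2[OF L] by blast
  show ?thesis
  proof (cases m)
    case (Suc d)
    have "insert vzero (L - {vzero}) = L"
      using L by (auto simp: lin_subspace_def)
    with L m Suc have "proj_subspace n d (L - {vzero})"
      by (simp add: proj_subspace_def)
    then have "d \<le> proj_index n a"
      using sing by (rule le_proj_index)
    with m Suc show ?thesis by simp
  qed (use m in simp)
qed

lemma singular_subspace_eq_generator:
  assumes L: "lin_subspace n L" and L_sing: "L - {vzero} \<subseteq> quadric n a"
    and C: "C \<subseteq> L" "C \<subseteq> quadric n a" and card_C: "card C = 2 ^ (proj_index n a + 1) - 1"
  shows "L = insert vzero C" and "generator n a C"
proof -
  have "vzero \<notin> C" "(1::nat) \<le> 2 ^ (proj_index n a + 1)"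
    using C(2) vzero_notin_quadric by auto
  then have card_C0: "card (insert vzero C) = 2 ^ (proj_index n a + 1)"
    using card_C finite_subset[OF C(2) finite_quadric] by simp
  have C0_sub: "insert vzero C \<subseteq> L"
    using C(1) L by (auto simp: lin_subspace_def)
  show L_eq: "L = insert vzero C"
  proof (rule card_subset_eq[OF lin_subspace_finite[OF L] C0_sub, symmetric])
    show "card (insert vzero C) = card L"
      using card_mono[OF lin_subspace_finite[OF L] C0_sub] card_singular_subspace_le[OF L L_sing]
        card_C0 by simp
  qed
  with L card_C0 C(2) vzero_notin_quadric show "generator n a C"
    by (auto simp: generator_def proj_subspace_def)
qed

lemma type_ii_not_switched: "type_ii n a \<alpha> X \<Longrightarrow> \<not> switched n a \<alpha> X"
  by (auto simp: switched_def Ys_def type_i_def type_ii_def type_iii_def)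

lemma gs_adj_type_ii_imp_qadj:
  assumes "type_ii n a \<alpha> X" "type_ii n a \<alpha> Y" "gs_adj n a \<alpha> X Y"
  shows "qadj n a X Y"
  using assms type_ii_not_switched[OF assms(1)] type_ii_not_switched[OF assms(2)]
  by (simp add: gs_adj_def)

lemma clique_union_orthogonal:
  assumes \<alpha>: "lin_subspace n (insert vzero \<alpha>)" "\<alpha> \<subseteq> quadric n a"
    and C: "gs_clique n a \<alpha> C" "\<forall>X\<in>C. \<not> type_iii n a \<alpha> X"
    and X: "X \<in> C \<union> \<alpha>" and Y: "Y \<in> C \<union> \<alpha>"
  shows "\<not> polar n a X Y"
proof -
  have Cq: "C \<subseteq> quadric n a"
    using C(1) by (simp add: gs_clique_def)
  have type_ii: "type_ii n a \<alpha> Z" if "Z \<in> C \<union> \<alpha>" "Z \<notin> \<alpha>" for Z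
    using that C(2) Cq by (auto simp: type_iii_def type_i_def)
  have "vadd X Y \<in> quadric n a" if "X \<noteq> Y"
  proof (cases "X \<in> \<alpha>"; cases "Y \<in> \<alpha>")
    assume "X \<in> \<alpha>" "Y \<in> \<alpha>"
    with \<alpha>(1) have "vadd X Y \<in> insert vzero \<alpha>"
      by (simp add: lin_subspace_def)
    with \<alpha>(2) that show ?thesis
      by (auto simp: vadd_eq_vzero_iff)
  next
    assume "X \<in> \<alpha>" "Y \<notin> \<alpha>"
    with type_ii[OF Y] vadd_in_proj_span[of X "insert Y \<alpha>" Y n] that show ?thesis
      by (auto simp: type_ii_def)
  next
    assume "X \<notin> \<alpha>" "Y \<in> \<alpha>"
    with type_ii[OF X] vadd_in_proj_span[of X "insert X \<alpha>" Y n] that show ?thesis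
      by (auto simp: type_ii_def)
  next
    assume "X \<notin> \<alpha>" "Y \<notin> \<alpha>"
    with X Y C(1) that have "gs_adj n a \<alpha> X Y"
      by (auto simp: gs_clique_def)
    with type_ii[OF X] type_ii[OF Y] \<open>X \<notin> \<alpha>\<close> \<open>Y \<notin> \<alpha>\<close> have "qadj n a X Y"
      by (blast intro: gs_adj_type_ii_imp_qadj)
    with vadd_in_proj_span[of X "{X, Y}" Y n] that show ?thesis
      by (auto simp: qadj_def)
  qed
  moreover have "X \<in> quadric n a" "Y \<in> quadric n a"
    using X Y Cq \<alpha>(2) by auto
  ultimately show ?thesis
    by (cases "X = Y") (auto simp: not_polar_self not_polar_if_line_in_quadric)
qed

theorem lemma5p2:
  fixes n s :: nat and a :: "nat \<Rightarrow> nat \<Rightarrow> bool" and \<alpha> C :: "(nat \<Rightarrow> bool) set"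
  assumes "nonsingular n a"
    and "proj_index n a \<ge> 1"
    and "s < proj_index n a"
    and "proj_subspace n s \<alpha>" and "\<alpha> \<subseteq> quadric n a"
    and "gs_clique n a \<alpha> C"
    and "card C = 2 ^ (proj_index n a + 1) - 1"
    and "\<forall>X\<in>C. \<not> type_iii n a \<alpha> X"
  shows "generator n a C \<and> \<alpha> \<subseteq> C"
proof -
  let ?S = "C \<union> \<alpha>"
  have Cq: "C \<subseteq> quadric n a"
    using assms(6) by (simp add: gs_clique_def)
  have "lin_subspace n (insert vzero \<alpha>)"
    using assms(4) by (simp add: proj_subspace_def)
  then have "lin_span n ?S - {vzero} \<subseteq> quadric n a"
    using Cq assms(5) clique_union_orthogonal[OF _ assms(5,6,8)]
    by (intro lin_span_subset_quadric) auto
  moreover have L: "lin_subspace n (lin_span n ?S)"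
    using Cq assms(5) quadric_subset_vecs by (intro lin_subspace_lin_span) blast
  moreover have "C \<subseteq> lin_span n ?S"
    using lin_span_superset by blast
  ultimately have "lin_span n ?S = insert vzero C" and "generator n a C"
    using singular_subspace_eq_generator[OF L _ _ Cq assms(7)] by auto
  moreover have "\<alpha> \<subseteq> lin_span n ?S"
    using lin_span_superset by blast
  ultimately show ?thesis
    using assms(5) vzero_notin_quadric by auto
qed

end
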